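(* Let $\mathbb{F}$ be a field, $D=(X,E,s,t)$ a finite directed multigraph, $U$ an $\mathbb{F}$-vector space, $\phi:X\to U$ a map, and $T\subset E$ a spanning forest of $D$. Let $\{r_1,\dots,r_{\delta_\phi}\}$ be any $\mathbb{F}$-basis of $\mathcal{Z}_{\mathrm{alg}}:=\mathrm{Im}(B_D)\cap\mathrm{Ker}(\hat\phi)$, and for each $i$ let $\zeta_{r_i}\in\mathrm{Ker}(\partial_\phi)$ be any element with $B_D(\zeta_{r_i})=r_i$ (such elements exist). Then $$\{Z_e^{(\mathrm{top})}\}_{e\in E\setminus T}\cup\{\zeta_{r_1},\dots,\zeta_{r_{\delta_\phi}}\}$$ is an $\mathbb{F}$-basis of $\mathrm{Ker}(\partial_\phi)$.
   Context: A finite directed multigraph $D=(X,E,s,t)$ has finite sets $X,E$ and maps $s,t:E\to X$ (loops and parallel edges allowed); $c(D)$ is its number of weakly connected components. $B_D:\mathbb{F}^E\to\mathbb{F}^X$ is linear with $B_D(\mathbf{1}_e)=\mathbf{1}_{t(e)}-\mathbf{1}_{s(e)}$; $\hat\phi:\mathbb{F}^X\to U$ is the linear extension of $\phi$; $\partial_\phi:\mathbb{F}^E\to U$ is linear with $\partial_\phi(\mathbf{1}_e)=\phi(t(e))-\phi(s(e))$; $\delta_\phi:=\dim(\mathrm{Im}(B_D)\cap\mathrm{Ker}(\hat\phi))$. A spanning forest is a subset $T\subset E$ whose underlying undirected graph is acyclic and with $|T|=|X|-c(D)$. For vertices $a,b$ in the same weakly connected component, let $a=y_0,\dots,y_m=b$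 be the unique simple path in the underlying graph of $T$, $g_k\in T$ the edge joining $y_{k-1},y_k$, $\eta_k=+1$ if $s(g_k)=y_{k-1}$ and $\eta_k=-1$ if $s(g_k)=y_k$; the signed path vector is $F[a,b]=\sum_k\eta_k\mathbf{1}_{g_k}$ (with $F[a,a]=0$). For $e\in E\setminus T$, the topological cycle is $Z_e^{(\mathrm{top})}:=\mathbf{1}_e-F[s(e),t(e)]\in\mathbb{F}^E$. *)

theory Defs
  imports Main "HOL.Vector_Spaces" "HOL-Library.Function_Algebras"
begin

text \<open>Vectors in F^E (resp. F^X) are functions 'e => 'f (resp. 'x => 'f) vanishing outside E
  (resp. X); their vector space structure is the pointwise one.\<close>

definition multigraph :: "'x set \<Rightarrow> 'e set \<Rightarrow> ('e \<Rightarrow> 'x) \<Rightarrow> ('e \<Rightarrow> 'x) \<Rightarrow> bool" where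
  "multigraph X E s t \<longleftrightarrow> finite X \<and> finite E \<and> (\<forall>e\<in>E. s e \<in> X \<and> t e \<in> X)"

definition fscale :: "'f::field \<Rightarrow> ('a \<Rightarrow> 'f) \<Rightarrow> ('a \<Rightarrow> 'f)" where
  "fscale c g = (\<lambda>x. c * g x)"

definition fspace :: "'a set \<Rightarrow> ('a \<Rightarrow> 'f::zero) set" where
  "fspace A = {g. \<forall>x. x \<notin> A \<longrightarrow> g x = 0}"

definition ind :: "'a \<Rightarrow> 'a \<Rightarrow> 'f::{zero,one}" where
  "ind a = (\<lambda>x. if x = a then 1 else 0)"

definition uconn :: "'e set \<Rightarrow> ('e \<Rightarrow> 'x) \<Rightarrow> ('e \<Rightarrow> 'x) \<Rightarrow> ('x \<times> 'x) set" where
  "uconn A s t = ({(s e, t e) | e. e \<in> A} \<union> {(t e, s e) | e. e \<in> A})\<^sup>*"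

definition ncomp :: "'x set \<Rightarrow> 'e set \<Rightarrow> ('e \<Rightarrow> 'x) \<Rightarrow> ('e \<Rightarrow> 'x) \<Rightarrow> nat" where
  "ncomp X E s t = card (X // uconn E s t)"

text \<open>The underlying undirected multigraph of (X,T) is acyclic: no edge of T lies on a cycle,
  i.e. the endpoints of every edge e of T are not connected in T - {e}
  (in particular T contains no loops and no pair of parallel edges).\<close>
definition acyclic_edges :: "'e set \<Rightarrow> ('e \<Rightarrow> 'x) \<Rightarrow> ('e \<Rightarrow> 'x) \<Rightarrow> bool" where
  "acyclic_edges T s t \<longleftrightarrow> (\<forall>e\<in>T. (s e, t e) \<notin> uconn (T - {e}) s t)"

definition spanning_forest :: "'x set \<Rightarrow> 'e set \<Rightarrow> ('e \<Rightarrow> 'x) \<Rightarrow> ('e \<Rightarrow> 'x) \<Rightarrow> 'e set \<Rightarrow> bool" where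
  "spanning_forest X E s t T \<longleftrightarrow>
     T \<subseteq> E \<and> acyclic_edges T s t \<and> card T = card X - ncomp X E s t"

definition simple_path ::
  "'e set \<Rightarrow> ('e \<Rightarrow> 'x) \<Rightarrow> ('e \<Rightarrow> 'x) \<Rightarrow> 'x \<Rightarrow> 'x \<Rightarrow> 'x list \<Rightarrow> 'e list \<Rightarrow> bool" where
  "simple_path T s t a b ys gs \<longleftrightarrow>
     length ys = Suc (length gs) \<and> hd ys = a \<and> last ys = b \<and> distinct ys \<and>
     (\<forall>k < length gs. gs ! k \<in> T \<and>
        ((s (gs ! k) = ys ! k \<and> t (gs ! k) = ys ! Suc k) \<or>
         (s (gs ! k) = ys ! Suc k \<and> t (gs ! k) = ys ! k)))"

definition path_vec ::
  "'e set \<Rightarrow> ('e \<Rightarrow> 'x) \<Rightarrow> ('e \<Rightarrow> 'x) \<Rightarrow> 'x \<Rightarrow> 'x \<Rightarrow> ('e \<Rightarrow> 'f::ring_1)" where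
  "path_vec T s t a b =
     (let (ys, gs) = (THE p. simple_path T s t a b (fst p) (snd p)) in
      (\<lambda>e. \<Sum>k<length gs. if gs ! k = e then (if s (gs ! k) = ys ! k then 1 else -1) else 0))"

definition Ztop :: "'e set \<Rightarrow> ('e \<Rightarrow> 'x) \<Rightarrow> ('e \<Rightarrow> 'x) \<Rightarrow> 'e \<Rightarrow> ('e \<Rightarrow> 'f::ring_1)" where
  "Ztop T s t e = (\<lambda>g. ind e g - path_vec T s t (s e) (t e) g)"

definition BD :: "'x set \<Rightarrow> 'e set \<Rightarrow> ('e \<Rightarrow> 'x) \<Rightarrow> ('e \<Rightarrow> 'x) \<Rightarrow> ('e \<Rightarrow> 'f::ring_1) \<Rightarrow> ('x \<Rightarrow> 'f)" where
  "BD X E s t z = (\<lambda>x. \<Sum>e\<in>E. z e * (ind (t e) x - ind (s e) x))"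

definition phi_hat :: "('f::field \<Rightarrow> 'u \<Rightarrow> 'u) \<Rightarrow> 'x set \<Rightarrow> ('x \<Rightarrow> 'u::comm_monoid_add) \<Rightarrow> ('x \<Rightarrow> 'f) \<Rightarrow> 'u" where
  "phi_hat scale X \<phi> g = (\<Sum>x\<in>X. scale (g x) (\<phi> x))"

definition dphi :: "('f::field \<Rightarrow> 'u \<Rightarrow> 'u) \<Rightarrow> 'e set \<Rightarrow> ('e \<Rightarrow> 'x) \<Rightarrow> ('e \<Rightarrow> 'x) \<Rightarrow> ('x \<Rightarrow> 'u::ab_group_add)
    \<Rightarrow> ('e \<Rightarrow> 'f) \<Rightarrow> 'u" where
  "dphi scale E s t \<phi> z = (\<Sum>e\<in>E. scale (z e) (\<phi> (t e) - \<phi> (s e)))"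

definition ker_dphi :: "('f::field \<Rightarrow> 'u \<Rightarrow> 'u) \<Rightarrow> 'e set \<Rightarrow> ('e \<Rightarrow> 'x) \<Rightarrow> ('e \<Rightarrow> 'x) \<Rightarrow> ('x \<Rightarrow> 'u::ab_group_add)
    \<Rightarrow> ('e \<Rightarrow> 'f) set" where
  "ker_dphi scale E s t \<phi> = {z \<in> fspace E. dphi scale E s t \<phi> z = 0}"

definition Zalg :: "('f::field \<Rightarrow> 'u \<Rightarrow> 'u) \<Rightarrow> 'x set \<Rightarrow> 'e set \<Rightarrow> ('e \<Rightarrow> 'x) \<Rightarrow> ('e \<Rightarrow> 'x)
    \<Rightarrow> ('x \<Rightarrow> 'u::ab_group_add) \<Rightarrow> ('x \<Rightarrow> 'f) set" where
  "Zalg scale X E s t \<phi> = BD X E s t ` fspace E \<inter> {g \<in> fspace X. phi_hat scale X \<phi> g = 0}"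

definition delta_phi :: "('f::field \<Rightarrow> 'u \<Rightarrow> 'u) \<Rightarrow> 'x set \<Rightarrow> 'e set \<Rightarrow> ('e \<Rightarrow> 'x) \<Rightarrow> ('e \<Rightarrow> 'x)
    \<Rightarrow> ('x \<Rightarrow> 'u::ab_group_add) \<Rightarrow> nat" where
  "delta_phi scale X E s t \<phi> = vector_space.dim fscale (Zalg scale X E s t \<phi>)"

definition is_basis_family :: "('f::field \<Rightarrow> 'v \<Rightarrow> 'v) \<Rightarrow> 'i set \<Rightarrow> ('i \<Rightarrow> 'v::ab_group_add) \<Rightarrow> 'v set \<Rightarrow> bool" where
  "is_basis_family sc I v W \<longleftrightarrow>
     inj_on v I \<and> module.independent sc (v ` I) \<and> module.span sc (v ` I) = W"

end

theory Submission
  imports Defs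
begin

text \<open>Since partial_phi = phi_hat o B_D, the incidence map B_D sends Ker partial_phi onto
  Im B_D \<inter> Ker phi_hat = Z_alg, and its kernel there is the cycle space Ker B_D. A basis of a
  subspace K is a basis of K \<inter> Ker L together with preimages in K of a basis of L(K); so it
  remains to see that the topological cycles form a basis of Ker B_D. The cycle Z_e has
  coordinate 1 at e and 0 at every other edge outside T, which gives independence. For z in
  Ker B_D, the vector z - (\<Sum>e. z_e Z_e) is supported on the forest T and has zero boundary,
  and such a vector vanishes: summing its boundary over the vertices on one side of a forest
  edge isolates that edge. Finally, Z_e is well defined because T is acyclic and, by the count
  c(T) = |X| - |T| = c(D), every edge of D joins vertices already connected in T.\<close>

section \<open>Linear algebra\<close>

lemma vector_space_fscale: "vector_space (fscale :: 'f::field \<Rightarrow> ('a \<Rightarrow> 'f) \<Rightarrow> ('a \<Rightarrow> 'f))"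
  by unfold_locales (auto simp: fscale_def algebra_simps)

interpretation fscale: vector_space "fscale :: 'f::field \<Rightarrow> ('a \<Rightarrow> 'f) \<Rightarrow> ('a \<Rightarrow> 'f)"
  by (rule vector_space_fscale)

lemma sum_fscale_apply: "(\<Sum>i\<in>I. fscale (c i) (f i)) x = (\<Sum>i\<in>I. c i * f i x)"
  by (induction I rule: infinite_finite_induct) (auto simp: fscale_def)

lemma subspace_fspace: "fscale.subspace (fspace A :: ('a \<Rightarrow> 'f::field) set)"
  by (auto simp: fscale.subspace_def fspace_def fscale_def)

context vector_space
begin

lemma in_span_image_iff:
  assumes "finite I"
  shows "x \<in> span (v ` I) \<longleftrightarrow> (\<exists>c. x = (\<Sum>i\<in>I. c i *s v i))"
proof
  assume "x \<in> span (v ` I)"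
  then show "\<exists>c. x = (\<Sum>i\<in>I. c i *s v i)"
  proof (induction rule: span_induct_alt)
    case base
    show ?case by (intro exI[of _ "\<lambda>_. 0"]) simp
  next
    case (step a w y)
    then obtain i c where i: "i \<in> I" "w = v i" and y: "y = (\<Sum>i\<in>I. c i *s v i)" by blast
    have "(if k = i then a else 0) *s v k = (if k = i then a *s v i else 0)" for k
      by simp
    then have "a *s w + y = (\<Sum>k\<in>I. (c k + (if k = i then a else 0)) *s v k)"
      using i \<open>finite I\<close> by (simp add: y scale_left_distrib sum.distrib)
    then show ?case by (rule exI[of _ "\<lambda>k. c k + (if k = i then a else 0)"])
  qed
next
  assume "\<exists>c. x = (\<Sum>i\<in>I. c i *s v i)"
  then show "x \<in> span (v ` I)" by (auto intro!: span_sum span_scale intro: span_base)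
qed

lemma inj_on_independent_image_iff:
  assumes "finite I"
  shows "inj_on v I \<and> independent (v ` I) \<longleftrightarrow>
    (\<forall>c. (\<Sum>i\<in>I. c i *s v i) = 0 \<longrightarrow> (\<forall>i\<in>I. c i = 0))"
proof safe
  fix c i
  assume inj: "inj_on v I" and indep: "independent (v ` I)"
    and sum: "(\<Sum>i\<in>I. c i *s v i) = 0" and i: "i \<in> I"
  have "(\<Sum>w\<in>v ` I. c (the_inv_into I v w) *s w) = 0"
    using sum by (simp add: sum.reindex[OF inj] the_inv_into_f_f[OF inj])
  then have "c (the_inv_into I v (v i)) = 0"
    using indep i \<open>finite I\<close> by (intro independentD[of "v ` I" "v ` I"]) auto
  then show "c i = 0"
    using i by (simp add: the_inv_into_f_f[OF inj])
next
  assume coeffs_zero: "\<forall>c. (\<Sum>i\<in>I. c i *s v i) = 0 \<longrightarrow> (\<forall>i\<in>I. c i = 0)"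
  show inj: "inj_on v I"
  proof (rule inj_onI, rule ccontr)
    fix i j assume ij: "i \<in> I" "j \<in> I" "v i = v j" "i \<noteq> j"
    define c :: "_ \<Rightarrow> 'a" where "c k = (if k = i then 1 else if k = j then -1 else 0)" for k
    have "(\<Sum>k\<in>I. c k *s v k) = (\<Sum>k\<in>I. (if k = i then v k else 0) - (if k = j then v k else 0))"
      using ij by (intro sum.cong) (auto simp: c_def)
    also have "\<dots> = 0"
      using ij \<open>finite I\<close> by (simp add: sum_subtractf)
    finally have "c i = 0"
      using coeffs_zero ij(1) by blast
    then show False by (simp add: c_def)
  qed
  show "dependent (v ` I) \<Longrightarrow> False"
  proof -
    assume "dependent (v ` I)"
    moreover have "independent (v ` I)"
    proof (rule independent_if_scalars_zero)
      fix f w assume "(\<Sum>w\<in>v ` I. f w *s w) = 0" "w \<in> v ` I"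
      then show "f w = 0"
        using coeffs_zero by (auto simp: sum.reindex[OF inj])
    qed (use \<open>finite I\<close> in simp)
    ultimately show False by simp
  qed
qed

end

context
  fixes s1 :: "'a::field \<Rightarrow> 'b::ab_group_add \<Rightarrow> 'b" and s2 :: "'a \<Rightarrow> 'c::ab_group_add \<Rightarrow> 'c"
    and L :: "'b \<Rightarrow> 'c" and K :: "'b set" and A :: "'i set" and B :: "'j set"
    and z :: "'i \<Rightarrow> 'b" and r :: "'j \<Rightarrow> 'c" and \<zeta> :: "'j \<Rightarrow> 'b"
  assumes L: "Vector_Spaces.linear s1 s2 L" and K: "module.subspace s1 K"
    and fin: "finite A" "finite B"
    and z: "is_basis_family s1 A z (K \<inter> {x. L x = 0})"
    and r: "is_basis_family s2 B r (L ` K)"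
    and \<zeta>: "\<And>j. j \<in> B \<Longrightarrow> \<zeta> j \<in> K \<and> L (\<zeta> j) = r j"
begin

interpretation Vector_Spaces.linear s1 s2 L by (rule L)

private lemma kernel_lift_sum_Plus:
  "(\<Sum>k\<in>A <+> B. s1 (c k) (case_sum z \<zeta> k))
     = (\<Sum>i\<in>A. s1 (c (Inl i)) (z i)) + (\<Sum>j\<in>B. s1 (c (Inr j)) (\<zeta> j))"
  using fin by (simp add: sum.Plus comp_def)

private lemma kernel_lift_L_sum: "L (\<Sum>j\<in>B. s1 (b j) (\<zeta> j)) = (\<Sum>j\<in>B. s2 (b j) (r j))"
  using \<zeta> by (simp add: sum scale)

private lemma kernel_lift_coeffs_eq_0:
  assumes sum0: "(\<Sum>k\<in>A <+> B. s1 (c k) (case_sum z \<zeta> k)) = 0"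
  shows "\<forall>k\<in>A <+> B. c k = 0"
proof -
  have Lz: "L (z i) = 0" if "i \<in> A" for i
    using z that vs1.span_base[of "z i" "z ` A"] by (auto simp: is_basis_family_def)
  have z_indep: "\<forall>i\<in>A. a i = 0" if "(\<Sum>i\<in>A. s1 (a i) (z i)) = 0" for a
    using z that vs1.inj_on_independent_image_iff[OF fin(1)] by (auto simp: is_basis_family_def)
  have r_indep: "\<forall>j\<in>B. b j = 0" if "(\<Sum>j\<in>B. s2 (b j) (r j)) = 0" for b
    using r that vs2.inj_on_independent_image_iff[OF fin(2)] by (auto simp: is_basis_family_def)
  have "L (\<Sum>i\<in>A. s1 (c (Inl i)) (z i)) = 0"
    using Lz by (simp add: sum scale)
  moreover have "L (\<Sum>k\<in>A <+> B. s1 (c k) (case_sum z \<zeta> k)) = 0"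
    using sum0 by (simp add: zero)
  ultimately have "(\<Sum>j\<in>B. s2 (c (Inr j)) (r j)) = 0"
    by (simp add: kernel_lift_sum_Plus add kernel_lift_L_sum)
  then have cB: "\<forall>j\<in>B. c (Inr j) = 0" by (rule r_indep)
  then have "(\<Sum>i\<in>A. s1 (c (Inl i)) (z i)) = 0"
    using sum0 by (simp add: kernel_lift_sum_Plus)
  then have "\<forall>i\<in>A. c (Inl i) = 0" by (rule z_indep)
  with cB show ?thesis by blast
qed

private lemma kernel_lift_span_eq: "vs1.span (case_sum z \<zeta> ` (A <+> B)) = K"
proof
  show "vs1.span (case_sum z \<zeta> ` (A <+> B)) \<subseteq> K"
    using K z \<zeta> vs1.span_base by (intro vs1.span_minimal) (auto simp: is_basis_family_def)
  show "K \<subseteq> vs1.span (case_sum z \<zeta> ` (A <+> B))"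
  proof
    fix x assume x: "x \<in> K"
    have "L x \<in> vs2.span (r ` B)" using r x by (simp add: is_basis_family_def)
    then obtain b where b: "L x = (\<Sum>j\<in>B. s2 (b j) (r j))"
      using vs2.in_span_image_iff[OF fin(2)] by blast
    define y where "y = x - (\<Sum>j\<in>B. s1 (b j) (\<zeta> j))"
    have "y \<in> K"
      unfolding y_def using K x \<zeta> by (intro vs1.subspace_diff vs1.subspace_sum vs1.subspace_scale) auto
    moreover have "L y = 0" by (simp add: y_def diff kernel_lift_L_sum b)
    ultimately have "y \<in> vs1.span (z ` A)" using z by (simp add: is_basis_family_def)
    then obtain a where a: "y = (\<Sum>i\<in>A. s1 (a i) (z i))"
      using vs1.in_span_image_iff[OF fin(1)] by blast
    have "x = (\<Sum>k\<in>A <+> B. s1 (case_sum a b k) (case_sum z \<zeta> k))"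
      by (simp add: kernel_lift_sum_Plus flip: a) (simp add: y_def)
    then show "x \<in> vs1.span (case_sum z \<zeta> ` (A <+> B))"
      using vs1.in_span_image_iff[of "A <+> B" x "case_sum z \<zeta>"] fin by auto
  qed
qed

lemma is_basis_family_kernel_lift: "is_basis_family s1 (Inl ` A \<union> Inr ` B) (case_sum z \<zeta>) K"
proof -
  have "inj_on (case_sum z \<zeta>) (A <+> B) \<and> vs1.independent (case_sum z \<zeta> ` (A <+> B))"
    using kernel_lift_coeffs_eq_0 fin vs1.inj_on_independent_image_iff[of "A <+> B" "case_sum z \<zeta>"]
    by auto
  then show ?thesis
    using kernel_lift_span_eq by (simp add: is_basis_family_def Plus_def)
qed

end

section \<open>The incidence map\<close>

lemma linear_BD: "Vector_Spaces.linear fscale fscale (BD X E s t :: ('e \<Rightarrow> 'f::field) \<Rightarrow> _)"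
  unfolding linear_iff
  by (simp add: vector_space_fscale BD_def fscale_def fun_eq_iff distrib_right sum.distrib
      sum_distrib_left mult.assoc)

interpretation BD: Vector_Spaces.linear fscale fscale "BD X E s t :: ('e \<Rightarrow> 'f::field) \<Rightarrow> _"
  for X E s t
  by (rule linear_BD)

lemma BD_in_fspace: "multigraph X E s t \<Longrightarrow> BD X E s t z \<in> fspace X"
  unfolding BD_def fspace_def multigraph_def ind_def by (auto intro!: sum.neutral)

lemma BD_ind:
  assumes "finite E" "e \<in> E"
  shows "BD X E s t (ind e) = ind (t e) - ind (s e)"
  using assms by (simp add: BD_def fun_eq_iff ind_def if_distrib[of "\<lambda>c. c * _"] sum.delta' cong: if_cong)

lemma sum_BD_eq:
  assumes "finite C"
  shows "(\<Sum>x\<in>C. BD X E s t u x) = (\<Sum>e\<in>E. u e * (of_bool (t e \<in> C) - of_bool (s e \<in> C)))"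
proof -
  have ind_sum: "(\<Sum>x\<in>C. ind a x) = of_bool (a \<in> C)" for a :: 'a
    using assms by (simp add: ind_def)
  have "(\<Sum>x\<in>C. BD X E s t u x) = (\<Sum>e\<in>E. \<Sum>x\<in>C. u e * (ind (t e) x - ind (s e) x))"
    unfolding BD_def by (rule sum.swap)
  also have "\<dots> = (\<Sum>e\<in>E. u e * (of_bool (t e \<in> C) - of_bool (s e \<in> C)))"
    by (simp add: sum_distrib_left[symmetric] sum_subtractf ind_sum)
  finally show ?thesis .
qed

lemma linear_dphi:
  assumes "vector_space scale"
  shows "Vector_Spaces.linear fscale scale (dphi scale E s t \<phi>)"
proof -
  interpret U: vector_space scale by fact
  show ?thesis
    unfolding linear_iff
    by (simp add: vector_space_fscale assms dphi_def fscale_def U.scale_left_distrib sum.distrib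
        U.scale_sum_right)
qed

lemma dphi_eq_phi_hat_BD:
  assumes D: "multigraph X E s t" and U: "vector_space scale"
  shows "dphi scale E s t \<phi> z = phi_hat scale X \<phi> (BD X E s t z)"
proof -
  interpret U: vector_space scale by fact
  have X: "finite X" "\<And>e. e \<in> E \<Longrightarrow> s e \<in> X \<and> t e \<in> X"
    using D by (auto simp: multigraph_def)
  have "scale (z e * ind y x) (\<phi> x) = (if x = y then scale (z e) (\<phi> y) else 0)" for e x y
    by (simp add: ind_def)
  then have point: "(\<Sum>x\<in>X. scale (z e * ind y x) (\<phi> x)) = scale (z e) (\<phi> y)" if "y \<in> X" for e y
    using X(1) that by (simp add: sum.delta')
  have "phi_hat scale X \<phi> (BD X E s t z)
      = (\<Sum>e\<in>E. \<Sum>x\<in>X. scale (z e * ind (t e) x) (\<phi> x) - scale (z e * ind (s e) x) (\<phi> x))"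
    unfolding phi_hat_def BD_def
    by (subst sum.swap) (simp add: U.scale_sum_left right_diff_distrib U.scale_left_diff_distrib)
  also have "\<dots> = dphi scale E s t \<phi> z"
    unfolding dphi_def using X(2)
    by (intro sum.cong) (simp_all add: sum_subtractf point U.scale_right_diff_distrib)
  finally show ?thesis ..
qed

section \<open>Connectivity and spanning forests\<close>

lemma uconn_refl [simp]: "(x, x) \<in> uconn A s t"
  by (simp add: uconn_def)

lemma uconn_sym: "(x, y) \<in> uconn A s t \<Longrightarrow> (y, x) \<in> uconn A s t"
  unfolding uconn_def by (rule symD[OF sym_rtrancl]) (auto simp: sym_def)

lemma uconn_trans: "(x, y) \<in> uconn A s t \<Longrightarrow> (y, z) \<in> uconn A s t \<Longrightarrow> (x, z) \<in> uconn A s t"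
  unfolding uconn_def by (rule rtrancl_trans)

lemma uconn_mono: "A \<subseteq> B \<Longrightarrow> uconn A s t \<subseteq> uconn B s t"
  unfolding uconn_def by (rule rtrancl_mono) blast

lemma uconn_edge: "e \<in> A \<Longrightarrow> (s e, t e) \<in> uconn A s t"
  unfolding uconn_def by (rule r_into_rtrancl) blast

lemma uconn_edge_rev: "e \<in> A \<Longrightarrow> (t e, s e) \<in> uconn A s t"
  by (rule uconn_sym[OF uconn_edge])

lemma uconn_insertE:
  assumes "(x, y) \<in> uconn (insert e A) s t"
  obtains "(x, y) \<in> uconn A s t"
    | "(x, s e) \<in> uconn A s t" "(t e, y) \<in> uconn A s t"
    | "(x, t e) \<in> uconn A s t" "(s e, y) \<in> uconn A s t"
proof -
  have "(x, y) \<in> uconn A s t \<or> (x, s e) \<in> uconn A s t \<and> (t e, y) \<in> uconn A s t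
      \<or> (x, t e) \<in> uconn A s t \<and> (s e, y) \<in> uconn A s t"
    using assms unfolding uconn_def[of "insert e A"]
  proof (induction rule: rtrancl_induct)
    case (step y z)
    then have "(y, z) \<in> uconn A s t \<or> y = s e \<and> z = t e \<or> y = t e \<and> z = s e"
      by (auto intro: uconn_edge uconn_edge_rev)
    with step.IH show ?case
      by (meson uconn_refl uconn_sym uconn_trans)
  qed simp
  with that show ?thesis by blast
qed

lemma uconn_Image_eq: "(a, b) \<in> uconn A s t \<Longrightarrow> uconn A s t `` {a} = uconn A s t `` {b}"
  by (blast intro: uconn_trans uconn_sym)

lemma uconn_Image_uconn_Image:
  assumes "A \<subseteq> B"
  shows "uconn B s t `` (uconn A s t `` {x}) = uconn B s t `` {x}"
  using uconn_mono[OF assms, of s t] by (auto intro: uconn_trans)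

lemma quotient_eq_image: "X // r = (\<lambda>x. r `` {x}) ` X"
  by (auto simp: quotient_def)

lemma quotient_uconn_eq_image:
  assumes "A \<subseteq> B"
  shows "X // uconn B s t = (\<lambda>C. uconn B s t `` C) ` (X // uconn A s t)"
  by (simp add: quotient_eq_image image_image uconn_Image_uconn_Image[OF assms])

lemma card_quotient_uconn_mono:
  assumes "finite X" "A \<subseteq> B"
  shows "card (X // uconn B s t) \<le> card (X // uconn A s t)"
  unfolding quotient_uconn_eq_image[OF assms(2)]
  using assms(1) by (intro card_image_le) (simp add: quotient_eq_image)

lemma inj_on_Image_uconn_insert:
  "inj_on (\<lambda>C. uconn (insert e A) s t `` C) (X // uconn A s t - {uconn A s t `` {t e}})"
proof (rule inj_onI)
  let ?R = "uconn A s t" and ?R' = "uconn (insert e A) s t"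
  fix C1 C2
  assume C1: "C1 \<in> X // ?R - {?R `` {t e}}" and C2: "C2 \<in> X // ?R - {?R `` {t e}}"
    and "?R' `` C1 = ?R' `` C2"
  obtain x1 x2 where x: "C1 = ?R `` {x1}" "C2 = ?R `` {x2}"
    using C1 C2 by (auto simp: quotient_eq_image)
  then have "?R' `` {x1} = ?R' `` {x2}"
    using \<open>?R' `` C1 = ?R' `` C2\<close> by (simp add: uconn_Image_uconn_Image subset_insertI)
  then have "x2 \<in> ?R' `` {x1}" by simp
  then have "(x1, x2) \<in> ?R'" by simp
  then show "C1 = C2"
  proof (cases rule: uconn_insertE)
    case 1
    then show ?thesis using x by (simp add: uconn_Image_eq)
  next
    case 2
    then have "C2 = ?R `` {t e}" using x(2) uconn_Image_eq[OF \<open>(t e, x2) \<in> ?R\<close>] by simp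
    with C2 show ?thesis by blast
  next
    case 3
    then have "C1 = ?R `` {t e}" using x(1) uconn_Image_eq[OF \<open>(x1, t e) \<in> ?R\<close>] by simp
    with C1 show ?thesis by blast
  qed
qed

lemma quotient_uconn_insert_eq_image:
  assumes "s e \<in> X" "(s e, t e) \<notin> uconn A s t"
  shows "X // uconn (insert e A) s t
    = (\<lambda>C. uconn (insert e A) s t `` C) ` (X // uconn A s t - {uconn A s t `` {t e}})"
proof -
  let ?R = "uconn A s t" and ?R' = "uconn (insert e A) s t"
  let ?Cs = "?R `` {s e}" and ?Ct = "?R `` {t e}"
  have "?Cs \<noteq> ?Ct" using assms(2) by (metis Image_singleton_iff uconn_refl)
  then have Cs: "?Cs \<in> X // ?R - {?Ct}" using quotientI[OF assms(1)] by simp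
  have "?R' `` ?Ct = ?R' `` ?Cs"
    using uconn_Image_eq[OF uconn_edge[of e "insert e A" s t]]
    by (simp add: uconn_Image_uconn_Image subset_insertI)
  then have "(\<lambda>C. ?R' `` C) ` (X // ?R) = (\<lambda>C. ?R' `` C) ` (X // ?R - {?Ct})"
    using Cs by blast
  then show ?thesis
    by (simp add: quotient_uconn_eq_image[of A "insert e A"] subset_insertI)
qed

lemma card_quotient_uconn_insert:
  assumes X: "finite X" "s e \<in> X" "t e \<in> X" and nc: "(s e, t e) \<notin> uconn A s t"
  shows "card (X // uconn (insert e A) s t) + 1 = card (X // uconn A s t)"
proof -
  have Ct: "uconn A s t `` {t e} \<in> X // uconn A s t" using X(3) by (rule quotientI)
  have "card (X // uconn (insert e A) s t) = card (X // uconn A s t) - 1"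
    using Ct by (simp add: quotient_uconn_insert_eq_image[OF X(2) nc] card_image
        inj_on_Image_uconn_insert)
  moreover have "card (X // uconn A s t) > 0"
    using X(1) Ct by (auto simp: card_gt_0_iff quotient_eq_image)
  ultimately show ?thesis by linarith
qed

lemma card_quotient_uconn_acyclic:
  assumes "finite T" "finite X" "\<forall>e\<in>T. s e \<in> X \<and> t e \<in> X" "acyclic_edges T s t"
  shows "card (X // uconn T s t) + card T = card X"
  using assms
proof (induction T rule: finite_induct)
  case empty
  have "uconn {} s t = Id" by (simp add: uconn_def)
  then show ?case by (simp add: quotient_eq_image card_image)
next
  case (insert e F)
  have "acyclic_edges F s t"
    using insert.prems(3) uconn_mono[of "F - {_}" "insert e F - {_}" s t]
    by (auto simp: acyclic_edges_def)
  moreover have "(s e, t e) \<notin> uconn F s t"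
    using insert.prems(3) insert.hyps(2) by (auto simp: acyclic_edges_def)
  ultimately show ?case
    using insert card_quotient_uconn_insert[of X s e t F] by simp
qed

lemma spanning_forest_connects:
  assumes D: "multigraph X E s t" and T: "spanning_forest X E s t T" and e: "e \<in> E"
  shows "(s e, t e) \<in> uconn T s t"
proof (rule ccontr)
  assume nc: "(s e, t e) \<notin> uconn T s t"
  have TE: "T \<subseteq> E" and cT: "card T = card X - ncomp X E s t" and "acyclic_edges T s t"
    using T by (auto simp: spanning_forest_def)
  have X: "finite X" "\<forall>e\<in>E. s e \<in> X \<and> t e \<in> X" and "finite E"
    using D by (auto simp: multigraph_def)
  then have "card (X // uconn T s t) + card T = card X"
    using TE \<open>acyclic_edges T s t\<close> by (intro card_quotient_uconn_acyclic) (auto intro: finite_subset)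
  moreover have "card (X // uconn (insert e T) s t) + 1 = card (X // uconn T s t)"
    using X e nc by (intro card_quotient_uconn_insert) auto
  moreover have "card (X // uconn E s t) \<le> card (X // uconn (insert e T) s t)"
    using TE e X(1) by (intro card_quotient_uconn_mono) auto
  ultimately show False using cT unfolding ncomp_def by linarith
qed

section \<open>Paths in a forest\<close>

definition joins :: "('e \<Rightarrow> 'x) \<Rightarrow> ('e \<Rightarrow> 'x) \<Rightarrow> 'e \<Rightarrow> 'x \<Rightarrow> 'x \<Rightarrow> bool" where
  "joins s t g a b \<longleftrightarrow> (s g = a \<and> t g = b) \<or> (s g = b \<and> t g = a)"

inductive spath :: "'e set \<Rightarrow> ('e \<Rightarrow> 'x) \<Rightarrow> ('e \<Rightarrow> 'x) \<Rightarrow> 'x \<Rightarrow> 'x \<Rightarrow> 'x list \<Rightarrow> 'e list \<Rightarrow> bool"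
  for T s t where
  spath_Nil: "spath T s t a a [a] []"
| spath_Cons: "g \<in> T \<Longrightarrow> joins s t g a y \<Longrightarrow> a \<notin> set ys \<Longrightarrow> spath T s t y b ys gs
    \<Longrightarrow> spath T s t a b (a # ys) (g # gs)"

lemma spath_hd_last: "spath T s t a b ys gs \<Longrightarrow> ys \<noteq> [] \<and> hd ys = a \<and> last ys = b"
  by (induction rule: spath.induct) auto

lemma simple_path_Nil: "simple_path T s t a b ys [] \<longleftrightarrow> ys = [a] \<and> b = a"
  by (cases ys) (auto simp: simple_path_def)

lemma simple_path_Cons:
  "simple_path T s t a b ys (g # gs) \<longleftrightarrow>
     (\<exists>ys'. ys = a # ys' \<and> g \<in> T \<and> joins s t g a (hd ys') \<and> a \<notin> set ys'
        \<and> simple_path T s t (hd ys') b ys' gs)"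
  by (cases ys) (auto simp: simple_path_def joins_def All_less_Suc2 hd_conv_nth)

lemma simple_path_iff_spath: "simple_path T s t a b ys gs \<longleftrightarrow> spath T s t a b ys gs"
proof (induction gs arbitrary: a ys)
  case Nil
  show ?case by (auto simp: simple_path_Nil intro: spath_Nil elim: spath.cases)
next
  case (Cons g gs)
  show ?case
    unfolding simple_path_Cons Cons.IH
  proof
    assume "spath T s t a b ys (g # gs)"
    then show "\<exists>ys'. ys = a # ys' \<and> g \<in> T \<and> joins s t g a (hd ys') \<and> a \<notin> set ys'
        \<and> spath T s t (hd ys') b ys' gs"
      by cases (auto dest: spath_hd_last)
  qed (auto intro: spath_Cons)
qed

lemma spath_edges: "spath T s t a b ys gs \<Longrightarrow> set gs \<subseteq> T"
  by (induction rule: spath.induct) auto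

lemma spath_edge_ends:
  "spath T s t a b ys gs \<Longrightarrow> g \<in> set gs \<Longrightarrow> s g \<in> set ys \<and> t g \<in> set ys"
proof (induction rule: spath.induct)
  case (spath_Cons g' a y ys b gs)
  then have "y \<in> set ys" by (metis spath_hd_last list.set_sel(1))
  with spath_Cons show ?case by (auto simp: joins_def)
qed simp

lemma spath_uconn: "spath T s t a b ys gs \<Longrightarrow> set gs \<subseteq> A \<Longrightarrow> (a, b) \<in> uconn A s t"
proof (induction rule: spath.induct)
  case (spath_Cons g a y ys b gs)
  then have "(a, y) \<in> uconn A s t"
    by (auto simp: joins_def intro: uconn_edge uconn_edge_rev)
  with spath_Cons show ?case by (auto intro: uconn_trans)
qed simp

lemma spath_suffix:
  "spath T s t a b ys gs \<Longrightarrow> d \<in> set ys \<Longrightarrow> \<exists>ys' gs'. spath T s t d b ys' gs'"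
  by (induction rule: spath.induct) (auto intro: spath.intros)

lemma spath_exists:
  assumes "(a, b) \<in> uconn T s t"
  shows "\<exists>ys gs. spath T s t a b ys gs"
  using assms unfolding uconn_def
proof (induction rule: converse_rtrancl_induct)
  case base
  show ?case by (auto intro: spath_Nil)
next
  case (step a c)
  then obtain ys gs where c: "spath T s t c b ys gs" by blast
  from step.hyps(1) obtain g where g: "g \<in> T" "joins s t g a c" by (auto simp: joins_def)
  show ?case
  proof (cases "a \<in> set ys")
    case True
    then show ?thesis using spath_suffix[OF c] by blast
  next
    case False
    then show ?thesis using spath_Cons[OF g False c] by blast
  qed
qed

text \<open>Two different first edges out of a would close a cycle through the first one.\<close>
lemma spath_unique:
  assumes ac: "acyclic_edges T s t"
  shows "spath T s t a b ys gs \<Longrightarrow> spath T s t a b ys' gs' \<Longrightarrow> ys = ys' \<and> gs = gs'"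
proof (induction arbitrary: ys' gs' rule: spath.induct)
  case (spath_Nil a)
  then show ?case by cases (auto dest: spath_hd_last)
next
  case (spath_Cons g a y ys b gs)
  have y: "y \<in> set ys" and b: "b \<in> set ys"
    using spath_hd_last[OF spath_Cons.hyps(4)] by (auto intro: last_in_set)
  from spath_Cons.prems obtain h z zs hs where
    primed: "ys' = a # zs" "gs' = h # hs" "h \<in> T" "joins s t h a z" "a \<notin> set zs"
      "spath T s t z b zs hs"
    using y b spath_Cons.hyps(3) by cases auto
  have z: "z \<in> set zs" using spath_hd_last[OF primed(6)] by auto
  have g_at_a: "s g = a \<or> t g = a" using spath_Cons.hyps(2) by (auto simp: joins_def)
  show ?case
  proof (cases "h = g")
    case True
    then have "y = z"
      using spath_Cons.hyps(2,3) primed(4,5) y z by (auto simp: joins_def)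
    then show ?thesis using spath_Cons.IH primed True by auto
  next
    case False
    have "g \<notin> set gs"
      using spath_edge_ends[OF spath_Cons.hyps(4)] g_at_a spath_Cons.hyps(3) by auto
    moreover have "g \<notin> set hs"
      using spath_edge_ends[OF primed(6)] g_at_a primed(5) by auto
    ultimately have gs: "set gs \<subseteq> T - {g}" and hs: "set (h # hs) \<subseteq> T - {g}"
      using spath_edges[OF spath_Cons.hyps(4)] spath_edges[OF primed(6)] primed(3) False by auto
    have yb: "(y, b) \<in> uconn (T - {g}) s t"
      by (rule spath_uconn[OF spath_Cons.hyps(4) gs])
    have ab: "(a, b) \<in> uconn (T - {g}) s t"
      by (rule spath_uconn[OF spath.spath_Cons[OF primed(3-6)] hs])
    have "(a, y) \<in> uconn (T - {g}) s t"
      by (rule uconn_trans[OF ab uconn_sym[OF yb]])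
    then have "(s g, t g) \<in> uconn (T - {g}) s t"
      using spath_Cons.hyps(2) uconn_sym by (auto simp: joins_def)
    then show ?thesis using ac spath_Cons.hyps(1) by (auto simp: acyclic_edges_def)
  qed
qed

section \<open>Topological cycles\<close>

definition walk_vec :: "('e \<Rightarrow> 'x) \<Rightarrow> 'x list \<Rightarrow> 'e list \<Rightarrow> 'e \<Rightarrow> 'f::ring_1" where
  "walk_vec s ys gs =
     (\<lambda>e. \<Sum>k<length gs. if gs ! k = e then (if s (gs ! k) = ys ! k then 1 else -1) else 0)"

lemma path_vec_eq_walk_vec:
  assumes "acyclic_edges T s t" "spath T s t a b ys gs"
  shows "path_vec T s t a b = walk_vec s ys gs"
proof -
  have "(THE p. simple_path T s t a b (fst p) (snd p)) = (ys, gs)"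
  proof (rule the_equality)
    fix p assume "simple_path T s t a b (fst p) (snd p)"
    then show "p = (ys, gs)"
      using spath_unique[OF assms] by (cases p) (simp add: simple_path_iff_spath)
  qed (simp add: simple_path_iff_spath assms(2))
  then show ?thesis by (simp add: path_vec_def walk_vec_def)
qed

lemma walk_vec_Nil: "walk_vec s ys [] = 0"
  by (simp add: walk_vec_def fun_eq_iff)

lemma walk_vec_Cons:
  "walk_vec s (a # ys) (g # gs) = fscale (if s g = a then 1 else -1) (ind g) + walk_vec s ys gs"
  unfolding walk_vec_def length_Cons sum.lessThan_Suc_shift nth_Cons_Suc nth_Cons_0
  by (auto simp: fun_eq_iff fscale_def ind_def)

lemma walk_vec_outside: "e \<notin> set gs \<Longrightarrow> walk_vec s ys gs e = 0"
  by (auto simp: walk_vec_def intro!: sum.neutral)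

lemma BD_walk_vec:
  assumes "spath T s t a b ys gs" "T \<subseteq> E" "finite E"
  shows "BD X E s t (walk_vec s ys gs :: 'e \<Rightarrow> 'f::field) = ind b - ind a"
  using assms
proof (induction rule: spath.induct)
  case (spath_Nil a)
  show ?case by (simp add: walk_vec_Nil BD_def fun_eq_iff)
next
  case (spath_Cons g a y ys b gs)
  define c :: 'f where "c = (if s g = a then 1 else -1)"
  have "y \<noteq> a" using spath_Cons.hyps(3,4) spath_hd_last by fastforce
  have "BD X E s t (walk_vec s (a # ys) (g # gs))
      = fscale c (BD X E s t (ind g)) + BD X E s t (walk_vec s ys gs)"
    by (simp only: walk_vec_Cons c_def BD.add BD.scale)
  also have "\<dots> = fscale c (ind (t g) - ind (s g)) + (ind b - ind y)"
    using spath_Cons.hyps(1) spath_Cons.prems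
    by (simp only: spath_Cons.IH BD_ind subsetD)
  also have "\<dots> = ind b - ind a"
    using spath_Cons.hyps(2) \<open>y \<noteq> a\<close> by (auto simp: c_def joins_def fscale_def fun_eq_iff ind_def)
  finally show ?case .
qed

lemma Ztop_eq_walk_vec:
  assumes D: "multigraph X E s t" and T: "spanning_forest X E s t T" and e: "e \<in> E"
  obtains ys gs where "spath T s t (s e) (t e) ys gs" "Ztop T s t e = ind e - walk_vec s ys gs"
proof -
  have "acyclic_edges T s t" using T by (simp add: spanning_forest_def)
  obtain ys gs where "spath T s t (s e) (t e) ys gs"
    using spath_exists[OF spanning_forest_connects[OF D T e]] by blast
  with that show ?thesis
    by (simp add: Ztop_def fun_eq_iff path_vec_eq_walk_vec[OF \<open>acyclic_edges T s t\<close>])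
qed

lemma BD_Ztop:
  assumes D: "multigraph X E s t" and T: "spanning_forest X E s t T" and e: "e \<in> E"
  shows "BD X E s t (Ztop T s t e :: 'e \<Rightarrow> 'f::field) = 0"
proof -
  obtain ys gs where path: "spath T s t (s e) (t e) ys gs"
    and Z: "(Ztop T s t e :: _ \<Rightarrow> 'f) = ind e - walk_vec s ys gs"
    by (rule Ztop_eq_walk_vec[OF D T e])
  have "finite E" "T \<subseteq> E" using D T by (auto simp: multigraph_def spanning_forest_def)
  then show ?thesis
    using e by (simp add: Z BD.diff BD_ind BD_walk_vec[OF path])
qed

lemma Ztop_outside_forest:
  assumes D: "multigraph X E s t" and T: "spanning_forest X E s t T" and e: "e \<in> E" and g: "g \<notin> T"
  shows "Ztop T s t e g = (ind e g :: 'f::ring_1)"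
proof -
  obtain ys gs where path: "spath T s t (s e) (t e) ys gs"
    and Z: "(Ztop T s t e :: _ \<Rightarrow> 'f) = ind e - walk_vec s ys gs"
    by (rule Ztop_eq_walk_vec[OF D T e])
  have "g \<notin> set gs" using spath_edges[OF path] g by blast
  then show ?thesis by (simp add: Z walk_vec_outside)
qed

lemma Ztop_in_fspace:
  assumes D: "multigraph X E s t" and T: "spanning_forest X E s t T" and e: "e \<in> E"
  shows "(Ztop T s t e :: _ \<Rightarrow> 'f::ring_1) \<in> fspace E"
  unfolding fspace_def
proof (intro CollectI allI impI)
  fix g assume "g \<notin> E"
  then have "g \<notin> T" "g \<noteq> e" using e T by (auto simp: spanning_forest_def)
  then show "(Ztop T s t e g :: 'f) = 0"
    using Ztop_outside_forest[OF D T e \<open>g \<notin> T\<close>] by (simp add: ind_def)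
qed

text \<open>Summing B u over the vertices reachable from s e0 in T - {e0} leaves only the
  contribution of e0, since every other edge of T has both or no ends in that set.\<close>
lemma fspace_forest_BD_eq_0:
  assumes D: "multigraph X E s t" and TE: "T \<subseteq> E" and ac: "acyclic_edges T s t"
    and u: "(u :: 'e \<Rightarrow> 'f::field) \<in> fspace T" and B: "BD X E s t u = 0"
  shows "u = 0"
proof
  fix e0
  show "u e0 = 0 e0"
  proof (cases "e0 \<in> T")
    case False
    then show ?thesis using u by (simp add: fspace_def)
  next
    case True
    have X: "finite X" "finite E" "\<And>e. e \<in> E \<Longrightarrow> s e \<in> X \<and> t e \<in> X"
      using D by (auto simp: multigraph_def)
    define C where "C = {x \<in> X. (s e0, x) \<in> uconn (T - {e0}) s t}"
    have "s e0 \<in> C" using X(3) True TE by (auto simp: C_def)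
    moreover have "t e0 \<notin> C" using ac True by (auto simp: C_def acyclic_edges_def)
    ultimately have e0: "u e0 * (of_bool (t e0 \<in> C) - of_bool (s e0 \<in> C)) = - u e0" by simp
    have others: "u e * (of_bool (t e \<in> C) - of_bool (s e \<in> C)) = 0" if "e \<in> E - {e0}" for e
    proof (cases "e \<in> T")
      case False
      then show ?thesis using u by (simp add: fspace_def)
    next
      case True
      then have "(s e, t e) \<in> uconn (T - {e0}) s t" "(t e, s e) \<in> uconn (T - {e0}) s t"
        using that by (auto intro: uconn_edge uconn_edge_rev)
      then have "s e \<in> C \<longleftrightarrow> t e \<in> C"
        using X(3) that by (auto simp: C_def intro: uconn_trans)
      then show ?thesis by simp
    qed
    have "0 = (\<Sum>x\<in>C. BD X E s t u x)" using B by simp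
    also have "\<dots> = (\<Sum>e\<in>E. u e * (of_bool (t e \<in> C) - of_bool (s e \<in> C)))"
      using X(1) by (simp add: C_def sum_BD_eq)
    also have "\<dots> = - u e0"
      using True TE X(2) sum.neutral[of "E - {e0}", OF ballI, OF others]
      by (simp add: sum.remove[of E e0] subsetD e0)
    finally show ?thesis by simp
  qed
qed

lemma sum_Ztop_apply:
  assumes D: "multigraph X E s t" and T: "spanning_forest X E s t T" and g: "g \<in> E - T"
  shows "(\<Sum>e\<in>E - T. fscale (c e) (Ztop T s t e)) g = (c g :: 'f::field)"
proof -
  have "(\<Sum>e\<in>E - T. c e * Ztop T s t e g) = (\<Sum>e\<in>E - T. if e = g then c e else 0)"
    using g Ztop_outside_forest[OF D T, where 'f = 'f] by (intro sum.cong) (auto simp: ind_def)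
  then show ?thesis using D g by (simp add: sum_fscale_apply multigraph_def)
qed

lemma cycle_eq_sum_Ztop:
  assumes D: "multigraph X E s t" and T: "spanning_forest X E s t T"
    and z: "z \<in> fspace E" "BD X E s t z = (0 :: 'x \<Rightarrow> 'f::field)"
  shows "z = (\<Sum>e\<in>E - T. fscale (z e) (Ztop T s t e))"
proof -
  define w where "w = z - (\<Sum>e\<in>E - T. fscale (z e) (Ztop T s t e))"
  have "w \<in> fspace T"
    unfolding fspace_def
  proof (intro CollectI allI impI)
    fix g assume "g \<notin> T"
    show "w g = 0"
    proof (cases "g \<in> E")
      case True
      then show ?thesis using \<open>g \<notin> T\<close> by (simp add: w_def sum_Ztop_apply[OF D T])
    next
      case False
      then have "z g = 0" "\<And>e. e \<in> E - T \<Longrightarrow> Ztop T s t e g = (0 :: 'f)"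
        using z Ztop_in_fspace[OF D T] by (auto simp: fspace_def)
      then show ?thesis by (simp add: w_def sum_fscale_apply)
    qed
  qed
  moreover have "BD X E s t w = 0"
    using z(2) BD_Ztop[OF D T, where 'f = 'f] by (simp add: w_def BD.diff BD.sum BD.scale)
  moreover have "T \<subseteq> E" "acyclic_edges T s t" using T by (auto simp: spanning_forest_def)
  ultimately have "w = 0" using fspace_forest_BD_eq_0[OF D] by blast
  then show ?thesis by (simp add: w_def)
qed

lemma subspace_cycles: "fscale.subspace {z \<in> fspace E. BD X E s t z = (0 :: 'x \<Rightarrow> 'f::field)}"
proof -
  have "{z \<in> fspace E. BD X E s t z = 0} = fspace E \<inter> {z. BD X E s t z = (0 :: 'x \<Rightarrow> 'f)}"
    by auto
  then show ?thesis by (simp add: fscale.subspace_inter subspace_fspace BD.subspace_kernel)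
qed

lemma is_basis_family_Ztop:
  fixes E :: "'e set"
  assumes D: "multigraph X E s t" and T: "spanning_forest X E s t T"
  shows "is_basis_family fscale (E - T) (Ztop T s t)
           {z \<in> fspace E. BD X E s t z = (0 :: 'x \<Rightarrow> 'f::field)}"
proof -
  let ?Z = "Ztop T s t :: 'e \<Rightarrow> 'e \<Rightarrow> 'f"
  have fin: "finite (E - T)" using D by (simp add: multigraph_def)
  have "inj_on ?Z (E - T) \<and> fscale.independent (?Z ` (E - T))"
    unfolding fscale.inj_on_independent_image_iff[OF fin]
    by (metis sum_Ztop_apply[OF D T] zero_fun_apply)
  moreover have "fscale.span (?Z ` (E - T)) \<subseteq> {z \<in> fspace E. BD X E s t z = 0}"
    using Ztop_in_fspace[OF D T] BD_Ztop[OF D T] by (intro fscale.span_minimal subspace_cycles) auto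
  moreover have "z \<in> fscale.span (?Z ` (E - T))" if "z \<in> fspace E" "BD X E s t z = 0" for z
    using cycle_eq_sum_Ztop[OF D T that] fscale.in_span_image_iff[OF fin] by blast
  ultimately show ?thesis
    unfolding is_basis_family_def by blast
qed

section \<open>Kernel of partial_phi\<close>

lemma subspace_ker_dphi:
  assumes "vector_space scale"
  shows "fscale.subspace (ker_dphi scale E s t \<phi>)"
proof -
  interpret dphi: Vector_Spaces.linear fscale scale "dphi scale E s t \<phi>" by (rule linear_dphi[OF assms])
  have "ker_dphi scale E s t \<phi> = fspace E \<inter> {z. dphi scale E s t \<phi> z = 0}"
    by (auto simp: ker_dphi_def)
  then show ?thesis
    by (simp add: fscale.subspace_inter subspace_fspace dphi.subspace_kernel)
qed

lemma ker_dphi_inter_ker_BD: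
  assumes "multigraph X E s t" "vector_space scale"
  shows "ker_dphi scale E s t \<phi> \<inter> {z. BD X E s t z = 0} = {z \<in> fspace E. BD X E s t z = 0}"
proof -
  interpret U: vector_space scale by (rule assms(2))
  show ?thesis
    by (auto simp: ker_dphi_def dphi_eq_phi_hat_BD[OF assms] phi_hat_def)
qed

lemma BD_image_ker_dphi:
  assumes "multigraph X E s t" "vector_space scale"
  shows "BD X E s t ` ker_dphi scale E s t \<phi> = Zalg scale X E s t \<phi>"
  by (auto simp: ker_dphi_def Zalg_def dphi_eq_phi_hat_BD[OF assms] BD_in_fspace[OF assms(1)])

theorem theorem2p15:
  fixes X :: "'x set" and E :: "'e set" and s t :: "'e \<Rightarrow> 'x"
    and scale :: "'f::field \<Rightarrow> 'u::ab_group_add \<Rightarrow> 'u"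
    and \<phi> :: "'x \<Rightarrow> 'u" and T :: "'e set"
    and r :: "nat \<Rightarrow> ('x \<Rightarrow> 'f)" and \<zeta> :: "nat \<Rightarrow> ('e \<Rightarrow> 'f)"
  assumes D: "multigraph X E s t"
    and U: "vector_space scale"
    and T: "spanning_forest X E s t T"
    and r: "is_basis_family fscale {..<delta_phi scale X E s t \<phi>} r (Zalg scale X E s t \<phi>)"
    and \<zeta>_ker: "\<forall>i < delta_phi scale X E s t \<phi>. \<zeta> i \<in> ker_dphi scale E s t \<phi>"
    and \<zeta>_lift: "\<forall>i < delta_phi scale X E s t \<phi>. BD X E s t (\<zeta> i) = r i"
  shows "is_basis_family fscale
           (Inl ` (E - T) \<union> Inr ` {..<delta_phi scale X E s t \<phi>})
           (case_sum (Ztop T s t) \<zeta>)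
           (ker_dphi scale E s t \<phi>)"
proof -
  let ?\<delta> = "delta_phi scale X E s t \<phi>"
  have fin: "finite (E - T)" using D by (simp add: multigraph_def)
  have cycles: "is_basis_family fscale (E - T) (Ztop T s t)
      (ker_dphi scale E s t \<phi> \<inter> {z. BD X E s t z = 0})"
    using is_basis_family_Ztop[OF D T] by (simp add: ker_dphi_inter_ker_BD[OF D U])
  have image: "is_basis_family fscale {..<?\<delta>} r (BD X E s t ` ker_dphi scale E s t \<phi>)"
    using r by (simp add: BD_image_ker_dphi[OF D U])
  show ?thesis
    by (rule is_basis_family_kernel_lift[OF linear_BD subspace_ker_dphi[OF U] fin finite_lessThan
          cycles image]) (use \<zeta>_ker \<zeta>_lift in simp)
qed

end
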